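(* Let $G=(F\cup C,E)$ be a finite bipartite graph with $F\neq\emptyset$ and no isolated vertices. In one iteration of FacilitySelect on $G$, the expected number of edges removed is at least $\max\{|F|,\,|E|/|F|\}$.
   Context: Let $G=(F\cup C,E)$ be a finite bipartite graph with parts $F$ (facilities) and $C$ (clients). The facility graph $G_F=(F,E_F)$ has an edge $\{i,i'\}$ ($i\ne i'$) iff $i$ and $i'$ have a common neighbor in $G$. Write $\deg(\cdot)$, $N(\cdot)$ for degree/neighborhood in $G$, $\deg_F(\cdot)$, $N_F(\cdot)$ for those in $G_F$. One iteration of FacilitySelect: every $i\in F$ independently draws $r_i$ uniformly from $[0,1]$; let $I=\{i\in F: r_i>\max_{i'\in N_F(i)} r_{i'}\}$ (the maximum over the empty set being $-\infty$); then all vertices of $I\cup N(I)$ are deleted from $G$ together with all their incident edges. "Clients removed" are the clients in $N(I)$; "edges removed" are the edges incident to deleted vertices. FacilitySelect repeats iterations while $F\ne\emptyset$. *)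

theory Defs
  imports "HOL-Probability.Probability"
begin

definition bipartite_graph :: "'v set \<Rightarrow> 'v set \<Rightarrow> ('v \<times> 'v) set \<Rightarrow> bool" where
  "bipartite_graph F C E \<longleftrightarrow> finite F \<and> finite C \<and> F \<inter> C = {} \<and> E \<subseteq> F \<times> C"

definition no_isolated :: "'v set \<Rightarrow> 'v set \<Rightarrow> ('v \<times> 'v) set \<Rightarrow> bool" where
  "no_isolated F C E \<longleftrightarrow> (\<forall>i\<in>F. \<exists>j. (i, j) \<in> E) \<and> (\<forall>j\<in>C. \<exists>i. (i, j) \<in> E)"

definition nbrs :: "('v \<times> 'v) set \<Rightarrow> 'v set \<Rightarrow> 'v set" where
  "nbrs E I = {j. \<exists>i\<in>I. (i, j) \<in> E}"

definition adjF :: "('v \<times> 'v) set \<Rightarrow> 'v \<Rightarrow> 'v \<Rightarrow> bool" where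
  "adjF E i i' \<longleftrightarrow> i \<noteq> i' \<and> (\<exists>j. (i, j) \<in> E \<and> (i', j) \<in> E)"

text \<open>The selected set I: facilities whose value exceeds the values of all G_F-neighbours
  (i.e. exceeds their maximum, with max over the empty set being minus infinity).\<close>
definition selected :: "'v set \<Rightarrow> ('v \<times> 'v) set \<Rightarrow> ('v \<Rightarrow> real) \<Rightarrow> 'v set" where
  "selected F E r = {i \<in> F. \<forall>i'\<in>F. adjF E i i' \<longrightarrow> r i' < r i}"

definition removed_edges :: "'v set \<Rightarrow> ('v \<times> 'v) set \<Rightarrow> ('v \<Rightarrow> real) \<Rightarrow> ('v \<times> 'v) set" where
  "removed_edges F E r =
     {e \<in> E. fst e \<in> selected F E r \<union> nbrs E (selected F E r)
            \<or> snd e \<in> selected F E r \<union> nbrs E (selected F E r)}"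

definition rand_space :: "'v set \<Rightarrow> ('v \<Rightarrow> real) measure" where
  "rand_space F = PiM F (\<lambda>_. uniform_measure lborel {0..1})"

end

theory Submission
  imports Defs
begin

(*
  For a client j let N(j) be its facility neighbours.  Two facilities of N(j)
  are adjacent in G_F, so at most one of them is selected; hence j is deleted iff exactly
  one facility of N(j) is selected, and since every edge of G has its client endpoint
  deleted iff it is removed,
      #removed edges = sum over (i',j) in E of  sum over i in N(j) of [i selected].
  A facility i is selected iff r_i beats the deg_F(i) other values r_k, k in N_F(i); for
  independent uniform values this happens with probability w(i) = 1/(deg_F(i)+1).
  By linearity, E[#removed] = sum_{(i',j) in E} sum_{i in N(j)} w(i).  This sum is
   - at least |E|/|F|, because every inner sum contains w(i') >= 1/|F|, and
   - at least |F|, because after exchanging the sums facility i is counted once for every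
     edge (k,j) with (i,j) in E, and there are at least deg_F(i)+1 such edges.
*)

section \<open>Independent uniform values\<close>

abbreviation uniform01 :: "real measure" where
  "uniform01 \<equiv> uniform_measure lborel {0..1}"

lemma prob_space_uniform01: "prob_space uniform01"
  by (rule prob_space_uniform_measure) auto

lemma prob_space_rand_space: "prob_space (rand_space F)"
  unfolding rand_space_def by (rule prob_space_PiM) (rule prob_space_uniform01)

lemma emeasure_uniform01_lessThan:
  "emeasure uniform01 {..<y} = ennreal (max 0 (min 1 y))"
proof -
  have "emeasure uniform01 {..<y} = emeasure lborel ({0..1} \<inter> {..<y})"
    by (simp add: divide_ennreal_def)
  also have "{0..1} \<inter> {..<y} = (if y < 0 then {} else if y \<le> 1 then {0..<y} else {0..1::real})"
    by auto
  finally show ?thesis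
    by (simp add: ennreal_neg)
qed

lemma nn_integral_uniform01_power:
  "(\<integral>\<^sup>+y. ennreal ((max 0 (min 1 y)) ^ d) \<partial>uniform01) = ennreal (1 / (real d + 1))"
proof -
  have deriv: "DERIV (\<lambda>x::real. x ^ Suc d / real (Suc d)) x :> x ^ d" for x
    using DERIV_cdivide[OF DERIV_pow[of "Suc d" x], of "real (Suc d)"] by simp
  have "(\<integral>\<^sup>+y. ennreal ((max 0 (min 1 y)) ^ d) \<partial>uniform01)
     = (\<integral>\<^sup>+y. ennreal ((max 0 (min 1 y)) ^ d) * indicator {0..1} y \<partial>lborel)
         / emeasure lborel {0..1::real}"
    by (rule nn_integral_uniform_measure) auto
  also have "\<dots> = (\<integral>\<^sup>+y. ennreal (y ^ d) * indicator {0..1} y \<partial>lborel)"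
    by (auto simp: divide_ennreal_def intro!: nn_integral_cong split: split_indicator)
  also have "\<dots> = ennreal ((1::real) ^ Suc d / real (Suc d) - 0 ^ Suc d / real (Suc d))"
    by (rule nn_integral_FTC_Icc[OF _ deriv]) auto
  finally show ?thesis by simp
qed

definition beats :: "'v set \<Rightarrow> 'v \<Rightarrow> 'v set \<Rightarrow> ('v \<Rightarrow> real) set" where
  "beats F i A = {r \<in> space (rand_space F). \<forall>k\<in>A. r k < r i}"

lemma beats_measurable:
  assumes "finite F" "i \<in> F" "A \<subseteq> F"
  shows "beats F i A \<in> sets (rand_space F)"
proof -
  have coord: "(\<lambda>r. r k) \<in> borel_measurable (rand_space F)" if "k \<in> F" for k
  proof -
    have sets_eq: "sets uniform01 = sets borel" by simp
    have "(\<lambda>r. r k) \<in> measurable (PiM F (\<lambda>_. uniform01)) uniform01"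
      by (rule measurable_component_singleton[OF that])
    then show ?thesis
      unfolding rand_space_def measurable_cong_sets[OF refl sets_eq] .
  qed
  show ?thesis
    unfolding beats_def
    using assms coord finite_subset[OF assms(3,1)]
    by (intro sets.sets_Collect_finite_All borel_measurable_less) auto
qed

text \<open>A value beats n independent uniform competitors with probability 1/(n+1):
  condition on the value y at i; the competitors all lie below y with probability y^n.\<close>
lemma emeasure_beats:
  fixes F :: "'v set"
  assumes fin: "finite F" and iF: "i \<in> F" and AF: "A \<subseteq> F" and iA: "i \<notin> A"
  shows "emeasure (rand_space F) (beats F i A) = ennreal (1 / (real (card A) + 1))"
proof -
  interpret U: prob_space uniform01 by (rule prob_space_uniform01)
  interpret P: product_prob_space "\<lambda>_::'v. uniform01" F
    by unfold_locales
  let ?M = "\<lambda>J. PiM J (\<lambda>_::'v. uniform01)"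
  let ?S = "beats F i A"
  have F_eq: "insert i (F - {i}) = F" using iF by auto
  have S_meas: "?S \<in> sets (?M F)"
    using beats_measurable[OF assms(1-3)] by (simp add: rand_space_def)
  have slice: "(\<integral>\<^sup>+ x. indicator ?S (x(i := y)) \<partial>?M (F - {i}))
             = ennreal ((max 0 (min 1 y)) ^ card A)" for y :: real
  proof -
    define B where "B = PiE (F - {i}) (\<lambda>k. if k \<in> A then {..<y} else UNIV)"
    have "(\<integral>\<^sup>+ x. indicator ?S (x(i := y)) \<partial>?M (F - {i}))
        = (\<integral>\<^sup>+ x. indicator B x \<partial>?M (F - {i}))"
    proof (rule nn_integral_cong)
      fix x assume "x \<in> space (?M (F - {i}))"
      then have "x(i := y) \<in> ?S \<longleftrightarrow> x \<in> B"
        using iF iA AF unfolding beats_def B_def rand_space_def space_PiM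
        by (auto simp: PiE_iff extensional_def)
      then show "indicator ?S (x(i := y)) = (indicator B x :: ennreal)"
        by (simp add: indicator_def)
    qed
    also have "\<dots> = (\<Prod>k\<in>F - {i}. emeasure uniform01 (if k \<in> A then {..<y} else UNIV))"
      unfolding B_def using fin
      by (simp add: sets_PiM_I_finite P.emeasure_PiM del: emeasure_uniform_measure)
    also have "\<dots> = (\<Prod>k\<in>F - {i}. if k \<in> A then ennreal (max 0 (min 1 y)) else 1)"
      using U.emeasure_space_1
      by (intro prod.cong refl)
        (auto simp del: emeasure_uniform_measure simp: emeasure_uniform01_lessThan)
    also have "\<dots> = ennreal (max 0 (min 1 y)) ^ card A"
    proof -
      have "(F - {i}) \<inter> {x. x \<in> A} = A" "(F - {i}) \<inter> A = A" using AF iA by auto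
      then show ?thesis by (simp add: prod.If_cases fin)
    qed
    finally show ?thesis
      by (simp only: ennreal_power[OF max.cobounded1])
  qed
  have "emeasure (?M F) ?S = (\<integral>\<^sup>+ r. indicator ?S r \<partial>?M F)"
    using S_meas by simp
  also have "\<dots> = (\<integral>\<^sup>+ y. (\<integral>\<^sup>+ x. indicator ?S (x(i := y)) \<partial>?M (F - {i})) \<partial>uniform01)"
  proof -
    have "indicator ?S \<in> borel_measurable (?M (insert i (F - {i})))"
      using S_meas by (simp only: F_eq borel_measurable_indicator)
    from P.product_nn_integral_insert_rev[OF _ _ this] show ?thesis
      using fin by (simp only: F_eq finite_Diff) simp
  qed
  also have "\<dots> = (\<integral>\<^sup>+ y. ennreal ((max 0 (min 1 y)) ^ card A) \<partial>uniform01)"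
    by (simp only: slice)
  finally show ?thesis
    by (simp add: nn_integral_uniform01_power rand_space_def)
qed

section \<open>Neighbourhoods and selection\<close>

definition fnbrs :: "'v set \<Rightarrow> ('v \<times> 'v) set \<Rightarrow> 'v \<Rightarrow> 'v set" where
  "fnbrs F E i = {k \<in> F. adjF E i k}"

definition cnbrs :: "'v set \<Rightarrow> ('v \<times> 'v) set \<Rightarrow> 'v \<Rightarrow> 'v set" where
  "cnbrs F E j = {i \<in> F. (i, j) \<in> E}"

text \<open>The selection probability 1/(deg_F(i)+1) of facility i.\<close>
definition weight :: "'v set \<Rightarrow> ('v \<times> 'v) set \<Rightarrow> 'v \<Rightarrow> real" where
  "weight F E i = 1 / (real (card (fnbrs F E i)) + 1)"

text \<open>The closed form of the expected number of removed edges: every edge (i',j)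
  contributes the selection probabilities of all facilities adjacent to its client j.\<close>
definition weighted_edge_sum :: "'v set \<Rightarrow> ('v \<times> 'v) set \<Rightarrow> real" where
  "weighted_edge_sum F E = (\<Sum>e\<in>E. \<Sum>i\<in>cnbrs F E (snd e). weight F E i)"

lemma fnbrs_subset: "fnbrs F E i \<subseteq> F - {i}"
  unfolding fnbrs_def adjF_def by auto

lemma selected_iff_beats:
  assumes "r \<in> space (rand_space F)"
  shows "i \<in> selected F E r \<longleftrightarrow> i \<in> F \<and> r \<in> beats F i (fnbrs F E i)"
  using assms unfolding selected_def beats_def fnbrs_def by auto

lemma prob_selected:
  assumes "finite F" "i \<in> F"
  shows "measure (rand_space F) (beats F i (fnbrs F E i)) = weight F E i"
proof -
  have "fnbrs F E i \<subseteq> F" "i \<notin> fnbrs F E i" using fnbrs_subset[of F E i] by auto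
  then show ?thesis
    using emeasure_beats[OF assms] by (simp add: measure_def weight_def)
qed

text \<open>Facilities sharing a client are adjacent in G_F, so at most one of them is selected:
  a client has a selected neighbour iff it has exactly one.\<close>
lemma card_selected_cnbrs:
  assumes "finite F"
  shows "card {i \<in> cnbrs F E j. i \<in> selected F E r} = of_bool (j \<in> nbrs E (selected F E r))"
proof -
  let ?S = "{i \<in> cnbrs F E j. i \<in> selected F E r}"
  have unique: "a = b" if "a \<in> ?S" "b \<in> ?S" for a b
  proof (rule ccontr)
    assume "a \<noteq> b"
    then have "adjF E a b" "adjF E b a"
      using that unfolding cnbrs_def adjF_def by auto
    then have "r b < r a" "r a < r b"
      using that unfolding selected_def cnbrs_def by auto
    then show False by simp
  qed
  have "finite ?S" using assms unfolding cnbrs_def by auto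
  moreover have "card ?S \<le> 1"
    using \<open>finite ?S\<close> unique by (simp add: card_le_Suc0_iff_eq)
  moreover have nonempty: "?S \<noteq> {} \<longleftrightarrow> j \<in> nbrs E (selected F E r)"
    unfolding cnbrs_def nbrs_def selected_def by auto
  ultimately show ?thesis
  proof (cases "j \<in> nbrs E (selected F E r)")
    case True
    then have "card ?S > 0" using \<open>finite ?S\<close> nonempty card_gt_0_iff by blast
    then show ?thesis using True \<open>card ?S \<le> 1\<close> by simp
  qed (use nonempty in simp)
qed

lemma removed_edges_eq:
  assumes "bipartite_graph F C E"
  shows "removed_edges F E r = {e \<in> E. snd e \<in> nbrs E (selected F E r)}"
proof -
  let ?S = "selected F E r"
  have EFC: "E \<subseteq> F \<times> C" and disj: "F \<inter> C = {}"
    using assms unfolding bipartite_graph_def by auto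
  have SF: "?S \<subseteq> F" and NC: "nbrs E ?S \<subseteq> C"
    using EFC unfolding selected_def nbrs_def by auto
  have "(fst e \<in> ?S \<union> nbrs E ?S \<or> snd e \<in> ?S \<union> nbrs E ?S) \<longleftrightarrow> snd e \<in> nbrs E ?S"
    if "e \<in> E" for e
  proof -
    have "fst e \<in> F" "snd e \<in> C" using that EFC by auto
    then have "fst e \<notin> nbrs E ?S" "snd e \<notin> ?S" using SF NC disj by auto
    moreover have "fst e \<in> ?S \<Longrightarrow> snd e \<in> nbrs E ?S"
      using that unfolding nbrs_def by (metis (mono_tags) mem_Collect_eq prod.collapse)
    ultimately show ?thesis by blast
  qed
  then show ?thesis
    unfolding removed_edges_def by (intro Collect_cong) blast
qed

lemma card_removed_edges_sum:
  assumes G: "bipartite_graph F C E" and r: "r \<in> space (rand_space F)"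
  shows "real (card (removed_edges F E r))
       = (\<Sum>e\<in>E. \<Sum>i\<in>cnbrs F E (snd e). indicator (beats F i (fnbrs F E i)) r)"
proof -
  have finF: "finite F" and finE: "finite E"
    using G finite_subset unfolding bipartite_graph_def by (auto intro: finite_cartesian_product)
  have "real (card (removed_edges F E r)) = (\<Sum>e\<in>E. of_bool (snd e \<in> nbrs E (selected F E r)))"
    using finE by (simp add: removed_edges_eq[OF G] Collect_conj_eq)
  also have "\<dots> = (\<Sum>e\<in>E. real (card {i \<in> cnbrs F E (snd e). i \<in> selected F E r}))"
    by (simp add: card_selected_cnbrs[OF finF])
  also have "\<dots> = (\<Sum>e\<in>E. \<Sum>i\<in>cnbrs F E (snd e). indicator (beats F i (fnbrs F E i)) r)"
  proof (rule sum.cong[OF refl])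
    fix e
    have "{i \<in> cnbrs F E (snd e). i \<in> selected F E r}
        = cnbrs F E (snd e) \<inter> {i. r \<in> beats F i (fnbrs F E i)}"
      using selected_iff_beats[OF r] unfolding cnbrs_def by auto
    moreover have "finite (cnbrs F E (snd e))" using finF unfolding cnbrs_def by auto
    ultimately show "real (card {i \<in> cnbrs F E (snd e). i \<in> selected F E r})
             = (\<Sum>i\<in>cnbrs F E (snd e). indicator (beats F i (fnbrs F E i)) r)"
      by (simp add: indicator_def)
  qed
  finally show ?thesis .
qed

section \<open>The expected number of removed edges\<close>

text \<open>Linearity of expectation applied to the identity card_removed_edges_sum.\<close>
lemma expected_removed_edges:
  assumes G: "bipartite_graph F C E"
  shows "(LINT r|rand_space F. real (card (removed_edges F E r))) = weighted_edge_sum F E"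
proof -
  interpret R: prob_space "rand_space F" by (rule prob_space_rand_space)
  have finF: "finite F" using G unfolding bipartite_graph_def by auto
  have meas: "beats F i (fnbrs F E i) \<in> R.events" if "i \<in> cnbrs F E j" for i j
    using that fnbrs_subset[of F E i] unfolding cnbrs_def
    by (intro beats_measurable[OF finF]) auto
  have int: "integrable (rand_space F) (indicator (beats F i (fnbrs F E i)) :: _ \<Rightarrow> real)"
    if "i \<in> cnbrs F E j" for i j
    using meas[OF that]
    by (intro integrable_real_indicator) (auto simp: R.emeasure_finite less_top[symmetric])
  have prob: "(LINT r|rand_space F. indicator (beats F i (fnbrs F E i)) r) = weight F E i"
    if "i \<in> cnbrs F E j" for i j
  proof -
    have "beats F i (fnbrs F E i) \<inter> space (rand_space F) = beats F i (fnbrs F E i)"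
      unfolding beats_def by blast
    then show ?thesis
      using prob_selected[OF finF] that unfolding cnbrs_def by simp
  qed
  have "(LINT r|rand_space F. real (card (removed_edges F E r)))
      = (LINT r|rand_space F.
           (\<Sum>e\<in>E. \<Sum>i\<in>cnbrs F E (snd e). indicator (beats F i (fnbrs F E i)) r))"
    using card_removed_edges_sum[OF G] by (intro Bochner_Integration.integral_cong) auto
  also have "\<dots> = (\<Sum>e\<in>E. LINT r|rand_space F.
                        (\<Sum>i\<in>cnbrs F E (snd e). indicator (beats F i (fnbrs F E i)) r))"
    by (rule Bochner_Integration.integral_sum, rule Bochner_Integration.integrable_sum, rule int)
  also have "\<dots> = (\<Sum>e\<in>E. \<Sum>i\<in>cnbrs F E (snd e).
                        LINT r|rand_space F. indicator (beats F i (fnbrs F E i)) r)"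
    by (intro sum.cong refl Bochner_Integration.integral_sum) (use int in blast)
  also have "\<dots> = (\<Sum>e\<in>E. \<Sum>i\<in>cnbrs F E (snd e). weight F E i)"
    by (intro sum.cong refl) (use prob in blast)
  finally show ?thesis unfolding weighted_edge_sum_def .
qed

section \<open>The two lower bounds\<close>

lemma weight_pos: "weight F E i > 0"
  unfolding weight_def by simp

lemma weight_ge_inverse_card:
  assumes "finite F" "i \<in> F"
  shows "1 / real (card F) \<le> weight F E i"
proof -
  have "card (fnbrs F E i) \<le> card (F - {i})"
    using assms fnbrs_subset[of F E i] by (intro card_mono) auto
  moreover have "card F > 0" using assms card_gt_0_iff by blast
  ultimately have "real (card (fnbrs F E i)) + 1 \<le> real (card F)"
    using assms by (simp add: card_Diff_singleton)
  then show ?thesis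
    unfolding weight_def by (intro divide_left_mono) auto
qed

text \<open>Facility i and each of its G_F-neighbours k own an edge (k,j) whose client is
  adjacent to i, so there are at least deg_F(i)+1 such edges.\<close>
lemma card_edges_near_facility:
  assumes finE: "finite E" and iF: "i \<in> F" and noiso: "no_isolated F C E"
  shows "card (fnbrs F E i) + 1 \<le> card {e \<in> E. (i, snd e) \<in> E}"
proof -
  let ?Ei = "{e \<in> E. (i, snd e) \<in> E}"
  have "insert i (fnbrs F E i) \<subseteq> fst ` ?Ei"
  proof
    fix k assume "k \<in> insert i (fnbrs F E i)"
    then obtain j where "(k, j) \<in> E" "(i, j) \<in> E"
      using noiso iF unfolding no_isolated_def fnbrs_def adjF_def by auto
    then show "k \<in> fst ` ?Ei" by force
  qed
  then have "card (insert i (fnbrs F E i)) \<le> card (fst ` ?Ei)"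
    using finE by (intro card_mono) auto
  also have "\<dots> \<le> card ?Ei"
    using finE by (intro card_image_le) auto
  finally have "card (insert i (fnbrs F E i)) \<le> card ?Ei" .
  moreover have "i \<notin> fnbrs F E i" using fnbrs_subset[of F E i] by auto
  moreover have "finite (fnbrs F E i)"
    using finE finite_subset[OF \<open>insert i (fnbrs F E i) \<subseteq> fst ` ?Ei\<close>] by auto
  ultimately show ?thesis by simp
qed

text \<open>First bound: the inner sum of edge (i',j) contains the term w(i') \<ge> 1/|F|.\<close>
lemma weighted_sum_ge_density:
  assumes G: "bipartite_graph F C E"
  shows "real (card E) / real (card F) \<le> weighted_edge_sum F E"
proof -
  have finF: "finite F" and EFC: "E \<subseteq> F \<times> C" using G unfolding bipartite_graph_def by auto
  have "1 / real (card F) \<le> (\<Sum>i\<in>cnbrs F E (snd e). weight F E i)" if "e \<in> E" for e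
  proof -
    have "fst e \<in> cnbrs F E (snd e)" using that EFC unfolding cnbrs_def by auto
    then have "weight F E (fst e) \<le> (\<Sum>i\<in>cnbrs F E (snd e). weight F E i)"
      using finF unfolding cnbrs_def by (intro member_le_sum) (auto intro: less_imp_le weight_pos)
    then show ?thesis
      using weight_ge_inverse_card[OF finF, of "fst e" E] \<open>fst e \<in> cnbrs F E (snd e)\<close>
      unfolding cnbrs_def by auto
  qed
  then have "(\<Sum>e\<in>E. 1 / real (card F)) \<le> (\<Sum>e\<in>E. \<Sum>i\<in>cnbrs F E (snd e). weight F E i)"
    by (rule sum_mono)
  then show ?thesis by (simp add: weighted_edge_sum_def)
qed

text \<open>Second bound, by double counting: exchanging the sums, facility i receives weight
  w(i) once per edge at a client adjacent to i, i.e. at least deg_F(i)+1 times.\<close>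
lemma weighted_sum_ge_card:
  assumes G: "bipartite_graph F C E" and noiso: "no_isolated F C E"
  shows "real (card F) \<le> weighted_edge_sum F E"
proof -
  have finF: "finite F" and finE: "finite E"
    using G finite_subset unfolding bipartite_graph_def by (auto intro: finite_cartesian_product)
  have "(\<Sum>i\<in>F. 1) \<le> (\<Sum>i\<in>F. real (card {e \<in> E. (i, snd e) \<in> E}) * weight F E i)"
  proof (rule sum_mono)
    fix i assume "i \<in> F"
    have "1 = (real (card (fnbrs F E i)) + 1) * weight F E i"
      unfolding weight_def by simp
    also have "\<dots> \<le> real (card {e \<in> E. (i, snd e) \<in> E}) * weight F E i"
      using card_edges_near_facility[OF finE \<open>i \<in> F\<close> noiso] weight_pos[of F E i]
      by (intro mult_right_mono) (auto simp flip: of_nat_le_iff)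
    finally show "1 \<le> real (card {e \<in> E. (i, snd e) \<in> E}) * weight F E i" .
  qed
  also have "\<dots> = weighted_edge_sum F E"
    unfolding weighted_edge_sum_def cnbrs_def
    using sum.swap_restrict[OF finE finF, of "\<lambda>e i. weight F E i" "\<lambda>e i. (i, snd e) \<in> E"]
    by simp
  finally show ?thesis by simp
qed

theorem lemma4:
  fixes F C :: "'v set" and E :: "('v \<times> 'v) set"
  assumes "bipartite_graph F C E"
    and "F \<noteq> {}"
    and "no_isolated F C E"
  shows "(LINT r|rand_space F. real (card (removed_edges F E r)))
           \<ge> max (real (card F)) (real (card E) / real (card F))"
  unfolding expected_removed_edges[OF assms(1)] max.bounded_iff
  using weighted_sum_ge_card[OF assms(1,3)] weighted_sum_ge_density[OF assms(1)] by blast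

end
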